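(* Let $S=(s_{jl})\in\mathbb{C}^{4\times4}$ be Hermitian and $\varepsilon\in\{1,-1\}$. If $\max\{p(\theta_1,\theta_2)^2-q(\theta_1,\theta_2):\theta_1,\theta_2\in(-\pi,\pi]\}=0$, then $S$ is diagonal, $S=\operatorname{diag}(s_{11},s_{22},s_{33},s_{44})$, and $s_{11}+s_{22}-s_{33}-s_{44}=0$.
   Context: Let $S=(s_{jl})_{j,l=1}^4$ be a Hermitian $4\times4$ complex matrix (so $s_{jj}\in\mathbb{R}$ and $s_{lj}=\overline{s_{jl}}$) and $\varepsilon\in\{1,-1\}$. For $\theta_1,\theta_2\in\mathbb{R}$ define $$p=-\tfrac12\Big[s_{11}+s_{22}+s_{33}+s_{44}+2\varepsilon\operatorname{Re}(s_{12}\mathrm{e}^{i\theta_1})+2\varepsilon\operatorname{Re}(s_{34}\mathrm{e}^{i\theta_2})\Big],$$ $$\begin{aligned}q={}&-\big(|s_{13}|^2-s_{11}s_{33}+|s_{14}|^2-s_{11}s_{44}+|s_{23}|^2-s_{22}s_{33}+|s_{24}|^2-s_{22}s_{44}\big)\\&-2\varepsilon\Big[-(s_{33}+s_{44})\operatorname{Re}(s_{12}\mathrm{e}^{i\theta_1})+\operatorname{Re}\big((s_{13}\overline{s_{23}}+s_{14}\overline{s_{24}})\mathrm{e}^{i\theta_1}\big)\\&\qquad-(s_{11}+s_{22})\operatorname{Re}(s_{34}\mathrm{e}^{i\theta_2})+\operatorname{Re}\big((\overline{s_{13}}s_{14}+\overline{s_{23}}s_{24})\mathrm{e}^{i\theta_2}\big)\Big]\\&-2\operatorname{Re}\big((s_{14}\overline{s_{23}}-s_{12}s_{34})\mathrm{e}^{i(\theta_1+\theta_2)}\big)-2\operatorname{Re}\big((s_{13}\overline{s_{24}}-s_{12}\overline{s_{34}})\mathrm{e}^{i(\theta_1-\theta_2)}\big).\end{aligned}$$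 *)

theory Defs
  imports Complex_Main
begin

definition hermitian4 :: "(nat \<Rightarrow> nat \<Rightarrow> complex) \<Rightarrow> bool" where
  "hermitian4 s \<longleftrightarrow> (\<forall>j\<in>{1..4}. \<forall>l\<in>{1..4}. s l j = cnj (s j l))"

definition diagonal4 :: "(nat \<Rightarrow> nat \<Rightarrow> complex) \<Rightarrow> bool" where
  "diagonal4 s \<longleftrightarrow> (\<forall>j\<in>{1..4}. \<forall>l\<in>{1..4}. j \<noteq> l \<longrightarrow> s j l = 0)"

text \<open>The function p(theta1, theta2). Diagonal entries are real (Hermitian), so we take Re.\<close>
definition pfun :: "(nat \<Rightarrow> nat \<Rightarrow> complex) \<Rightarrow> real \<Rightarrow> real \<Rightarrow> real \<Rightarrow> real" where
  "pfun s \<epsilon> t1 t2 = - (1/2) * (Re (s 1 1) + Re (s 2 2) + Re (s 3 3) + Re (s 4 4)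
      + 2 * \<epsilon> * Re (s 1 2 * cis t1) + 2 * \<epsilon> * Re (s 3 4 * cis t2))"

definition qfun :: "(nat \<Rightarrow> nat \<Rightarrow> complex) \<Rightarrow> real \<Rightarrow> real \<Rightarrow> real \<Rightarrow> real" where
  "qfun s \<epsilon> t1 t2 =
     - ((cmod (s 1 3))\<^sup>2 - Re (s 1 1) * Re (s 3 3) + (cmod (s 1 4))\<^sup>2 - Re (s 1 1) * Re (s 4 4)
        + (cmod (s 2 3))\<^sup>2 - Re (s 2 2) * Re (s 3 3) + (cmod (s 2 4))\<^sup>2 - Re (s 2 2) * Re (s 4 4))
     - 2 * \<epsilon> * ( - (Re (s 3 3) + Re (s 4 4)) * Re (s 1 2 * cis t1)
        + Re ((s 1 3 * cnj (s 2 3) + s 1 4 * cnj (s 2 4)) * cis t1)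
        - (Re (s 1 1) + Re (s 2 2)) * Re (s 3 4 * cis t2)
        + Re ((cnj (s 1 3) * s 1 4 + cnj (s 2 3) * s 2 4) * cis t2))
     - 2 * Re ((s 1 4 * cnj (s 2 3) - s 1 2 * s 3 4) * cis (t1 + t2))
     - 2 * Re ((s 1 3 * cnj (s 2 4) - s 1 2 * cnj (s 3 4)) * cis (t1 - t2))"

end

theory Submission
  imports Defs
begin

(* For every pair of angles, p^2 - q is a sum of two squares:
     p^2 - q = g^2 / 4 + |c|^2,
   where g (the "diagonal gap") is the difference of the two 2x2 block traces
   (s11 + s22 + 2 eps Re(s12 e^{i t1})) - (s33 + s44 + 2 eps Re(s34 e^{i t2}))
   and c (the "coupling") is the combination
   s13 + eps e^{-i t1} s23 + eps e^{i t2} s14 + e^{-i t1} e^{i t2} s24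
   of the off-diagonal block entries.  This is a polynomial identity in the
   real and imaginary parts of the entries, valid for all unit numbers
   e^{i t1}, e^{i t2} and eps^2 = 1.  Hence p^2 - q >= 0 everywhere, so the
   bound p^2 - q <= 0 (the maximum being 0) forces g = 0 and c = 0 at every
   angle pair; that the maximum is attained is then automatic and not used.
   Evaluating at the angles 0, pi, pi/2 kills s12, s34 and the four entries
   of the off-diagonal block; Hermitian symmetry then gives a diagonal matrix
   with real diagonal, and g = 0 at (0,0) gives s11 + s22 = s33 + s44. *)

definition diag_gap :: "(nat \<Rightarrow> nat \<Rightarrow> complex) \<Rightarrow> real \<Rightarrow> real \<Rightarrow> real \<Rightarrow> real" where
  "diag_gap s e t1 t2 =
     (Re (s 1 1) + Re (s 2 2) + 2 * e * Re (s 1 2 * cis t1))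
   - (Re (s 3 3) + Re (s 4 4) + 2 * e * Re (s 3 4 * cis t2))"

definition coupling :: "(nat \<Rightarrow> nat \<Rightarrow> complex) \<Rightarrow> real \<Rightarrow> real \<Rightarrow> real \<Rightarrow> complex" where
  "coupling s e t1 t2 =
     s 1 3 + e * cnj (cis t1) * s 2 3 + e * cis t2 * s 1 4 + cnj (cis t1) * cis t2 * s 2 4"

lemma discriminant_sum_of_squares_algebraic:
  fixes a11 a22 a33 a44 e :: real and z12 z34 z13 z14 z23 z24 c1 c2 :: complex
  assumes "cmod c1 = 1" and "cmod c2 = 1" and "e\<^sup>2 = 1"
  shows "(- (1/2) * (a11 + a22 + a33 + a44 + 2*e*Re (z12*c1) + 2*e*Re (z34*c2)))\<^sup>2 -
     (- ((cmod z13)\<^sup>2 - a11*a33 + (cmod z14)\<^sup>2 - a11*a44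
         + (cmod z23)\<^sup>2 - a22*a33 + (cmod z24)\<^sup>2 - a22*a44)
      - 2 * e * ( - (a33 + a44) * Re (z12 * c1)
         + Re ((z13 * cnj z23 + z14 * cnj z24) * c1)
         - (a11 + a22) * Re (z34 * c2)
         + Re ((cnj z13 * z14 + cnj z23 * z24) * c2))
      - 2 * Re ((z14 * cnj z23 - z12 * z34) * (c1 * c2))
      - 2 * Re ((z13 * cnj z24 - z12 * cnj z34) * (c1 * cnj c2)))
   = ((a11 + a22 + 2*e*Re (z12*c1)) - (a33 + a44 + 2*e*Re (z34*c2)))\<^sup>2 / 4
     + (cmod (z13 + e * cnj c1 * z23 + e * c2 * z14 + cnj c1 * c2 * z24))\<^sup>2"
proof -
  have "(Re c1)\<^sup>2 + (Im c1)\<^sup>2 = 1" and "(Re c2)\<^sup>2 + (Im c2)\<^sup>2 = 1"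
    using assms(1,2) by (simp_all add: cmod_def)
  with assms(3) show ?thesis
    unfolding cmod_power2 by (simp add: power2_eq_square) algebra
qed

lemma discriminant_sum_of_squares:
  assumes "e\<^sup>2 = 1"
  shows "(pfun s e t1 t2)\<^sup>2 - qfun s e t1 t2
       = (diag_gap s e t1 t2)\<^sup>2 / 4 + (cmod (coupling s e t1 t2))\<^sup>2"
proof -
  have "cis (t1 - t2) = cis t1 * cnj (cis t2)"
    by (simp add: cis_cnj cis_mult)
  then show ?thesis
    unfolding pfun_def qfun_def diag_gap_def coupling_def cis_mult[symmetric]
    by (simp only: discriminant_sum_of_squares_algebraic[OF norm_cis norm_cis assms])
qed

lemma discriminant_nonpos_imp_gap_and_coupling_zero:
  assumes "e\<^sup>2 = 1" and "(pfun s e t1 t2)\<^sup>2 - qfun s e t1 t2 \<le> 0"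
  shows "diag_gap s e t1 t2 = 0" and "coupling s e t1 t2 = 0"
proof -
  have sum: "(diag_gap s e t1 t2)\<^sup>2 / 4 + (cmod (coupling s e t1 t2))\<^sup>2 \<le> 0"
    using assms discriminant_sum_of_squares by metis
  have "(diag_gap s e t1 t2)\<^sup>2 = 0" and "(cmod (coupling s e t1 t2))\<^sup>2 = 0"
    using sum zero_le_power2[of "diag_gap s e t1 t2"] zero_le_power2[of "cmod (coupling s e t1 t2)"]
    by linarith+
  then show "diag_gap s e t1 t2 = 0" and "coupling s e t1 t2 = 0"
    by simp_all
qed

lemma special_angles_in_range: "0 \<in> {-pi<..pi}" "pi \<in> {-pi<..pi}" "pi/2 \<in> {-pi<..pi}"
  using pi_gt_zero by auto

lemma gap_zero_at_special_angles:
  assumes "e \<noteq> 0"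
    and gap: "\<forall>t1\<in>{-pi<..pi}. \<forall>t2\<in>{-pi<..pi}. diag_gap s e t1 t2 = 0"
  shows "s 1 2 = 0" and "s 3 4 = 0" and "Re (s 1 1) + Re (s 2 2) = Re (s 3 3) + Re (s 4 4)"
proof -
  have g: "diag_gap s e 0 0 = 0" "diag_gap s e pi 0 = 0" "diag_gap s e (pi/2) 0 = 0"
    "diag_gap s e 0 pi = 0" "diag_gap s e 0 (pi/2) = 0"
    using gap special_angles_in_range by simp_all
  then have "e * Re (s 1 2) = 0" "e * Im (s 1 2) = 0" "e * Re (s 3 4) = 0" "e * Im (s 3 4) = 0"
    unfolding diag_gap_def by (simp_all del: mult_eq_0_iff)
  with assms(1) show "s 1 2 = 0" and "s 3 4 = 0"
    by (simp_all add: complex_eq_iff)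
  then show "Re (s 1 1) + Re (s 2 2) = Re (s 3 3) + Re (s 4 4)"
    using g(1) by (simp add: diag_gap_def)
qed

text \<open>The coupling vanishing at the four sign patterns of the phases is a
  nonsingular (Hadamard-type) linear system for the off-diagonal block.\<close>

lemma coupling_zero_at_sign_angles:
  assumes "e \<noteq> 0"
    and coup: "\<forall>t1\<in>{-pi<..pi}. \<forall>t2\<in>{-pi<..pi}. coupling s e t1 t2 = 0"
  shows "s 1 3 = 0" and "s 1 4 = 0" and "s 2 3 = 0" and "s 2 4 = 0"
proof -
  have "coupling s e 0 0 = 0" "coupling s e pi 0 = 0" "coupling s e 0 pi = 0" "coupling s e pi pi = 0"
    using coup special_angles_in_range by simp_all
  then have sign_patterns: "s 1 3 + e * s 2 3 + e * s 1 4 + s 2 4 = 0" "s 1 3 - e * s 2 3 + e * s 1 4 - s 2 4 = 0"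
    "s 1 3 + e * s 2 3 - e * s 1 4 - s 2 4 = 0" "s 1 3 - e * s 2 3 - e * s 1 4 + s 2 4 = 0"
    by (simp_all add: coupling_def)
  have "4 * s 1 3 = 0" "4 * (e * s 1 4) = 0" "4 * (e * s 2 3) = 0" "4 * s 2 4 = 0"
    using sign_patterns by algebra+
  with assms(1) show "s 1 3 = 0" and "s 1 4 = 0" and "s 2 3 = 0" and "s 2 4 = 0"
    by simp_all
qed

lemma hermitian4_upper_zero_imp_diagonal4:
  assumes herm: "hermitian4 s"
    and "s 1 2 = 0" "s 1 3 = 0" "s 1 4 = 0" "s 2 3 = 0" "s 2 4 = 0" "s 3 4 = 0"
  shows "diagonal4 s"
  unfolding diagonal4_def
proof (intro ballI impI)
  fix j l :: nat
  assume j: "j \<in> {1..4}" and l: "l \<in> {1..4}" and "j \<noteq> l"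
  have sym: "s j l = cnj (s l j)"
    using herm j l unfolding hermitian4_def by blast
  have "j < l \<or> l < j"
    using \<open>j \<noteq> l\<close> by arith
  then have "s j l = 0 \<or> s l j = 0"
    using j l assms(2-7) by (auto simp: atLeastAtMost_iff eval_nat_numeral less_Suc_eq_le le_Suc_eq)
  then show "s j l = 0"
    using sym by auto
qed

lemma hermitian4_diagonal_real:
  assumes "hermitian4 s" and "j \<in> {1..4}"
  shows "Im (s j j) = 0"
proof -
  have "s j j = cnj (s j j)"
    using assms unfolding hermitian4_def by blast
  then show ?thesis
    by (simp add: complex_eq_iff)
qed

theorem mainTheorem12:
  fixes s :: "nat \<Rightarrow> nat \<Rightarrow> complex" and \<epsilon> :: real
  assumes herm: "hermitian4 s"
    and eps: "\<epsilon> \<in> {1, -1}"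
    and max_attained: "\<exists>t1\<in>{-pi<..pi}. \<exists>t2\<in>{-pi<..pi}.
                         (pfun s \<epsilon> t1 t2)\<^sup>2 - qfun s \<epsilon> t1 t2 = 0"
    and max_bound: "\<forall>t1\<in>{-pi<..pi}. \<forall>t2\<in>{-pi<..pi}.
                         (pfun s \<epsilon> t1 t2)\<^sup>2 - qfun s \<epsilon> t1 t2 \<le> 0"
  shows "diagonal4 s \<and> s 1 1 + s 2 2 - s 3 3 - s 4 4 = 0"
proof -
  have sign: "\<epsilon>\<^sup>2 = 1" "\<epsilon> \<noteq> 0"
    using eps by auto
  have gap: "\<forall>t1\<in>{-pi<..pi}. \<forall>t2\<in>{-pi<..pi}. diag_gap s \<epsilon> t1 t2 = 0"
    and coup: "\<forall>t1\<in>{-pi<..pi}. \<forall>t2\<in>{-pi<..pi}. coupling s \<epsilon> t1 t2 = 0"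
    using max_bound discriminant_nonpos_imp_gap_and_coupling_zero[OF sign(1)] by simp_all
  note block_diag = gap_zero_at_special_angles[OF sign(2) gap]
  note off_block = coupling_zero_at_sign_angles[OF sign(2) coup]
  have "diagonal4 s"
    using hermitian4_upper_zero_imp_diagonal4[OF herm] block_diag(1,2) off_block by blast
  moreover have "s 1 1 + s 2 2 - s 3 3 - s 4 4 = 0"
    using block_diag(3) hermitian4_diagonal_real[OF herm, of 1] hermitian4_diagonal_real[OF herm, of 2]
      hermitian4_diagonal_real[OF herm, of 3] hermitian4_diagonal_real[OF herm, of 4]
    by (simp add: complex_eq_iff)
  ultimately show ?thesis ..
qed

end
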